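(* Consider the AdaDROPS scheme described in the context (with either Option I or Option II as the support-update rule), and let $\bar{\mathcal{I}}\subseteq\{1,\dots,N\}$ be the set at which the nondecreasing sequence $\mathcal{I}^{(k)}$ eventually stabilizes. Assume the iterates $x^{(k)}$ converge to a point $\tilde{x}$ which is a minimizer of the restricted problem $$\min_{x\in\mathbb{R}^n}\ \frac{1}{2\lambda}\|AP_{\bar T}x-y\|^2+\|LP_{\bar T}x\|_{1,2}$$ and satisfies $\tilde{x}_i=0$ for all $i\notin\bar{\mathcal{E}}$. Then $\tilde{x}$ is a global minimizer of the original problem $$\min_{x\in\mathbb{R}^n}\ \frac{1}{2\lambda}\|Ax-y\|^2+\|Lx\|_{1,2}.$$
   Context: Let $n,N\in\mathbb{N}$, let $G_1,\dots,G_N\subseteq\{1,\dots,n\}$ be nonempty groups, possibly overlapping, with $\bigcup_iG_i=\{1,\dots,n\}$, and weights $w_i>0$. $x_G$ denotes the subvector of $x$ indexed by $G$ (increasing order). Let $p=\sum_i|G_i|$, partition $\{1,\dots,p\}$ into consecutive blocks $J_i=\{\sum_{j<i}|G_j|+1,\dots,\sum_{j\le i}|G_j|\}$, and define the lifting operator $L\in\mathbb{R}^{p\times n}$ by $(Lx)_{J_i}=w_ix_{G_i}$; for $z\in\mathbb{R}^p$, $\|z\|_{1,2}=\sum_i\|z_{J_i}\|$ (Euclidean norms). Let $A\in\mathbb{R}^{m\times n}$, $y\in\mathbb{R}^m$, $\lambda>0$. For an index set $\mathcal{I}\subseteq\{1,\dots,N\}$ define $\mathcal{E}(\mathcal{I})=\{1,\dots,n\}\setminus\bigcup_{t\notin\mathcal{I}}G_t$,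 $T(\mathcal{I})=\{x\in\mathbb{R}^n:\mathrm{supp}(x)\subseteq\mathcal{E}(\mathcal{I})\}$, $\mathcal{E}_z(\mathcal{I})=\bigcup_{t\in\mathcal{I}}J_t$, $T_z(\mathcal{I})=\{z\in\mathbb{R}^p:\mathrm{supp}(z)\subseteq\mathcal{E}_z(\mathcal{I})\}$, and $\widehat{L}(\mathcal{I})=L-P_{T_z(\mathcal{I})}LP_{T(\mathcal{I})^\perp}$, where $P_T$ is the orthogonal (coordinate) projection onto $T$ and $T^\perp$ its orthogonal complement; $\widehat{L}(\mathcal{I})^\top\widehat{L}(\mathcal{I})$ is invertible. AdaDROPS scheme: starting from some $\mathcal{I}^{(0)}$ and $x^{(0)}$, at step $k$ an inner solver produces $x^{(k+1)}$ (for the problem restricted to $T(\mathcal{I}^{(k)})$, i.e. with $A,L$ replaced by $AP_{T(\mathcal{I}^{(k)})},LP_{T(\mathcal{I}^{(k)})}$); then with $\beta^{(k+1)}=-\frac1\lambda A^\top(Ax^{(k+1)}-y)$ the index set is updated by Option I: $\mathcal{I}^{(k+1)}=\mathcal{I}^{(k)}\cup\{t:\|\beta^{(k+1)}_{G_t}\|\ge w_t\}$, or Option II: with $u^{(k+1)}=\widehat{L}(\mathcal{I}^{(k)})(\widehat{L}(\mathcal{I}^{(k)})^\top\widehat{L}(\mathcal{I}^{(k)}))^{-1}\beta^{(k+1)}$, $\mathcal{I}^{(k+1)}=\mathcal{I}^{(k)}\cup\{t:\|u^{(k+1)}_{J_t}\|\ge 1\}$. Since $\mathcal{I}^{(k)}$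 is nondecreasing in a finite set it stabilizes at some $\bar{\mathcal{I}}$; write $\bar{\mathcal{E}}=\mathcal{E}(\bar{\mathcal{I}})$ and $\bar T=T(\bar{\mathcal{I}})$. *)

theory Defs
  imports "HOL-Analysis.Analysis"
begin

text \<open>The lifted space R^p is represented as real^('g \<times> 'n): block J_t consists of the
  coordinates (t,j) with j \<in> G t; the remaining coordinates (t,j) with j \<notin> G t are
  dummy coordinates on which L (and hence everything derived from it) vanishes.\<close>

definition liftL :: "('g::finite \<Rightarrow> 'n::finite set) \<Rightarrow> ('g \<Rightarrow> real) \<Rightarrow> real^'n^('g \<times> 'n)" where
  "liftL G w = (\<chi> r i. if snd r \<in> G (fst r) \<and> i = snd r then w (fst r) else 0)"

definition blocknorm :: "('g::finite \<Rightarrow> 'n::finite set) \<Rightarrow> real^('g \<times> 'n) \<Rightarrow> 'g \<Rightarrow> real" where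
  "blocknorm G z t = sqrt (\<Sum>j\<in>G t. (z $ (t, j))\<^sup>2)"

definition norm12 :: "('g::finite \<Rightarrow> 'n::finite set) \<Rightarrow> real^('g \<times> 'n) \<Rightarrow> real" where
  "norm12 G z = (\<Sum>t\<in>UNIV. blocknorm G z t)"

definition subnorm :: "'n::finite set \<Rightarrow> real^'n \<Rightarrow> real" where
  "subnorm S x = sqrt (\<Sum>j\<in>S. (x $ j)\<^sup>2)"

definition Eset :: "('g::finite \<Rightarrow> 'n::finite set) \<Rightarrow> 'g set \<Rightarrow> 'n set" where
  "Eset G I = UNIV - (\<Union>t\<in>UNIV - I. G t)"

definition projT :: "('g::finite \<Rightarrow> 'n::finite set) \<Rightarrow> 'g set \<Rightarrow> real^'n^'n" where
  "projT G I = (\<chi> i j. if i = j \<and> i \<in> Eset G I then 1 else 0)"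

definition projTz :: "('g::finite \<Rightarrow> 'n::finite set) \<Rightarrow> 'g set \<Rightarrow> real^('g \<times> 'n)^('g \<times> 'n)" where
  "projTz G I = (\<chi> r s. if r = s \<and> fst r \<in> I \<and> snd r \<in> G (fst r) then 1 else 0)"

definition Lhat :: "('g::finite \<Rightarrow> 'n::finite set) \<Rightarrow> ('g \<Rightarrow> real) \<Rightarrow> 'g set \<Rightarrow> real^'n^('g \<times> 'n)" where
  "Lhat G w I = liftL G w - projTz G I ** liftL G w ** (mat 1 - projT G I)"

definition objective :: "('g::finite \<Rightarrow> 'n::finite set) \<Rightarrow> real^'n^'m::finite \<Rightarrow> real^'m \<Rightarrow> real
    \<Rightarrow> real^'n^('g \<times> 'n) \<Rightarrow> real^'n \<Rightarrow> real" where
  "objective G A y lam L x = 1 / (2 * lam) * (norm (A *v x - y))\<^sup>2 + norm12 G (L *v x)"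

definition betavec :: "real^'n::finite^'m::finite \<Rightarrow> real^'m \<Rightarrow> real \<Rightarrow> real^'n \<Rightarrow> real^'n" where
  "betavec A y lam x = (- (1 / lam)) *\<^sub>R (transpose A *v (A *v x - y))"

definition optionI_update :: "('g::finite \<Rightarrow> 'n::finite set) \<Rightarrow> ('g \<Rightarrow> real) \<Rightarrow> 'g set \<Rightarrow> real^'n \<Rightarrow> 'g set" where
  "optionI_update G w I b = I \<union> {t. subnorm (G t) b \<ge> w t}"

definition optionII_update :: "('g::finite \<Rightarrow> 'n::finite set) \<Rightarrow> ('g \<Rightarrow> real) \<Rightarrow> 'g set \<Rightarrow> real^'n \<Rightarrow> 'g set" where
  "optionII_update G w I b =
     (let Lh = Lhat G w I;
          u = Lh *v (matrix_inv (transpose Lh ** Lh) *v b)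
      in I \<union> {t. blocknorm G u t \<ge> 1})"

end

(*
  Let beta = -A^T (A xt - y) / lam be the negative gradient of the loss at xt and R the group
  penalty, so that the objective is F = loss + R.  Minimality of xt on the coordinate subspace
  T(Ibar) gives the variational inequality <beta, v - xt> <= R v - R xt for v in T(Ibar).
  Split an arbitrary z as z = P z + q with q supported off Eset G Ibar.  Every coordinate j off
  Eset G Ibar lies in an excluded group, and beta_j = sum of (w t)^2 / D j * beta_j over the
  excluded groups t containing j, where D j (outer_weight) is the sum of the (w s)^2 over these
  groups.  The pieces gamma_t (dual_block), supported on G t, satisfy |gamma_t| <= w t: for
  Option I because t is rejected at every late step, so |beta_{G t}| <= w t in the limit; for
  Option II because u restricted to the block J_t is exactly gamma_t / w t.  Cauchy-Schwarz then
  bounds <beta, q> by sum_{t notin Ibar} w t |q_{G t}|, which is the penalty q adds to P z;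
  together with the convexity of the loss this gives F z >= F xt.
*)
theory Submission
  imports Defs
begin

section \<open>Coordinate restriction and the group penalty\<close>

definition restrict_coords :: "'n::finite set \<Rightarrow> real^'n \<Rightarrow> real^'n" where
  "restrict_coords S x = (\<chi> j. if j \<in> S then x $ j else 0)"

lemma restrict_coords_component [simp]:
  "restrict_coords S x $ j = (if j \<in> S then x $ j else 0)"
  by (simp add: restrict_coords_def)

lemma projT_mult_vec: "projT G I *v x = restrict_coords (Eset G I) x"
  unfolding matrix_vector_mult_def projT_def
  by (auto simp: vec_eq_iff if_distrib[where f="\<lambda>a. a * c" for c] cong: if_cong)

lemma liftL_mult_vec_component:
  "(liftL G w *v x) $ r = (if snd r \<in> G (fst r) then w (fst r) * x $ snd r else 0)"
  unfolding matrix_vector_mult_def liftL_def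
  by (auto simp: if_distrib[where f="\<lambda>a. a * c" for c] cong: if_cong)

lemma subnorm_eq_norm_restrict_coords: "subnorm S x = norm (restrict_coords S x)"
proof -
  have "(\<Sum>j\<in>UNIV. (if j \<in> S then x $ j else 0)\<^sup>2) = (\<Sum>j\<in>S. (x $ j)\<^sup>2)"
    by (simp add: if_distrib[where f="\<lambda>a. a ^ 2"] sum.If_cases)
  then show ?thesis
    unfolding subnorm_def norm_vec_def L2_set_def by simp
qed

lemma subnorm_nonneg: "subnorm S x \<ge> 0"
  by (simp add: subnorm_eq_norm_restrict_coords)

lemma subnorm_mono:
  assumes "\<And>j. j \<in> S \<Longrightarrow> \<bar>a $ j\<bar> \<le> \<bar>b $ j\<bar>"
  shows "subnorm S a \<le> subnorm S b"
  unfolding subnorm_def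
  by (intro real_sqrt_le_mono sum_mono) (metis assms abs_le_square_iff)

lemma subnorm_cauchy_schwarz: "(\<Sum>j\<in>S. a $ j * b $ j) \<le> subnorm S a * subnorm S b"
proof -
  have "(\<Sum>j\<in>S. a $ j * b $ j) = inner (restrict_coords S a) (restrict_coords S b)"
    unfolding inner_vec_def by (simp add: if_distrib sum.If_cases)
  also have "\<dots> \<le> norm (restrict_coords S a) * norm (restrict_coords S b)"
    by (rule norm_cauchy_schwarz)
  finally show ?thesis
    unfolding subnorm_eq_norm_restrict_coords .
qed

lemma convex_on_subnorm: "convex_on UNIV (subnorm S)"
proof (rule convex_onI)
  fix s :: real and a b
  assume "0 < s" "s < 1"
  have "restrict_coords S ((1 - s) *\<^sub>R a + s *\<^sub>R b)
      = (1 - s) *\<^sub>R restrict_coords S a + s *\<^sub>R restrict_coords S b"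
    by (simp add: vec_eq_iff)
  then show "subnorm S ((1 - s) *\<^sub>R a + s *\<^sub>R b) \<le> (1 - s) * subnorm S a + s * subnorm S b"
    unfolding subnorm_eq_norm_restrict_coords
    by (metis \<open>0 < s\<close> \<open>s < 1\<close> abs_of_pos diff_gt_0_iff_gt norm_scaleR norm_triangle_ineq)
qed simp

definition group_penalty :: "('g::finite \<Rightarrow> 'n::finite set) \<Rightarrow> ('g \<Rightarrow> real) \<Rightarrow> real^'n \<Rightarrow> real" where
  "group_penalty G w x = (\<Sum>t\<in>UNIV. w t * subnorm (G t) x)"

lemma norm12_liftL:
  assumes "\<And>t. w t \<ge> 0"
  shows "norm12 G (liftL G w *v x) = group_penalty G w x"
  unfolding norm12_def group_penalty_def
proof (rule sum.cong[OF refl])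
  fix t
  have "blocknorm G (liftL G w *v x) t = sqrt ((w t)\<^sup>2 * (\<Sum>j\<in>G t. (x $ j)\<^sup>2))"
    unfolding blocknorm_def liftL_mult_vec_component
    by (simp add: power_mult_distrib sum_distrib_left)
  also have "\<dots> = w t * subnorm (G t) x"
    unfolding subnorm_def real_sqrt_mult using assms[of t] by simp
  finally show "blocknorm G (liftL G w *v x) t = w t * subnorm (G t) x" .
qed

lemma convex_on_group_penalty:
  assumes "\<And>t. w t \<ge> 0"
  shows "convex_on UNIV (group_penalty G w)"
proof -
  have "convex_on UNIV (\<lambda>x. \<Sum>t\<in>T. w t * subnorm (G t) x)" for T
    by (induction T rule: infinite_finite_induct)
      (auto intro!: assms convex_on_subnorm simp: convex_on_const)
  then show ?thesis
    unfolding group_penalty_def .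
qed

section \<open>First-order optimality for least squares plus a convex penalty\<close>

definition lsq_loss :: "real^'n::finite^'m::finite \<Rightarrow> real^'m \<Rightarrow> real \<Rightarrow> real^'n \<Rightarrow> real" where
  "lsq_loss A y lam x = 1 / (2 * lam) * (norm (A *v x - y))\<^sup>2"

lemma objective_liftL:
  assumes "\<And>t. w t \<ge> 0"
  shows "objective G A y lam (liftL G w) x = lsq_loss A y lam x + group_penalty G w x"
  unfolding objective_def lsq_loss_def norm12_liftL[OF assms] ..

lemma objective_mult_right:
  "objective G (A ** P) y lam (L ** P) x = objective G A y lam L (P *v x)"
  unfolding objective_def matrix_vector_mul_assoc ..

lemma lsq_loss_add_scaleR:
  "lsq_loss A y lam (x + s *\<^sub>R d)
     = lsq_loss A y lam x - s * inner (betavec A y lam x) d + s\<^sup>2 * ((norm (A *v d))\<^sup>2 / (2 * lam))"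
proof (cases "lam = 0")
  case True
  then show ?thesis
    by (simp add: lsq_loss_def betavec_def)
next
  case False
  define r where "r = A *v x - y"
  have "A *v (x + s *\<^sub>R d) - y = r + s *\<^sub>R (A *v d)"
    unfolding r_def by (simp add: algebra_simps)
  moreover have "(norm (r + s *\<^sub>R (A *v d)))\<^sup>2
      = (norm r)\<^sup>2 + 2 * s * inner r (A *v d) + s\<^sup>2 * (norm (A *v d))\<^sup>2"
    unfolding power2_norm_eq_inner
    by (simp add: inner_commute power2_eq_square algebra_simps)
  moreover have "inner r (A *v d) = - lam * inner (betavec A y lam x) d"
    unfolding betavec_def r_def using False by (simp add: dot_lmul_matrix[symmetric])
  moreover have "1 / (2 * lam) * (n + 2 * s * (- lam * i) + s\<^sup>2 * m)
      = 1 / (2 * lam) * n - s * i + s\<^sup>2 * (m / (2 * lam))" for n i m :: real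
    using False by (simp add: field_simps)
  ultimately show ?thesis
    unfolding lsq_loss_def r_def[symmetric] by simp
qed

lemma nonneg_if_quadratic_nonneg_near_zero:
  fixes b c :: real
  assumes "\<And>s. 0 < s \<Longrightarrow> s \<le> 1 \<Longrightarrow> 0 \<le> s * b + s\<^sup>2 * c"
  shows "0 \<le> b"
proof (rule tendsto_lowerbound)
  show "((\<lambda>s. b + s * c) \<longlongrightarrow> b) (at_right 0)"
    using tendsto_add[OF tendsto_const tendsto_mult_left_zero[OF tendsto_ident_at, of c]] by simp
  have "0 \<le> b + s * c" if "0 < s" "s \<le> 1" for s
  proof -
    have "0 \<le> s * (b + s * c)"
      using assms[OF that] by (simp add: power2_eq_square algebra_simps)
    then show ?thesis
      using \<open>0 < s\<close> by (simp add: zero_le_mult_iff)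
  qed
  then show "\<forall>\<^sub>F s in at_right 0. 0 \<le> b + s * c"
    unfolding eventually_at_right_field by (intro exI[of _ 1]) auto
qed simp

lemma lsq_first_order_condition:
  assumes "convex_on UNIV R"
    and "\<And>s. 0 < s \<Longrightarrow> s \<le> 1 \<Longrightarrow>
           lsq_loss A y lam x + R x \<le> lsq_loss A y lam (x + s *\<^sub>R d) + R (x + s *\<^sub>R d)"
  shows "inner (betavec A y lam x) d \<le> R (x + d) - R x"
proof -
  define c where "c = (norm (A *v d))\<^sup>2 / (2 * lam)"
  have "0 \<le> s * (R (x + d) - R x - inner (betavec A y lam x) d) + s\<^sup>2 * c"
    if "0 < s" "s \<le> 1" for s
  proof -
    have "R (x + s *\<^sub>R d) = R ((1 - s) *\<^sub>R x + s *\<^sub>R (x + d))"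
      by (simp add: algebra_simps)
    also have "\<dots> \<le> (1 - s) * R x + s * R (x + d)"
      using that by (intro convex_onD[OF assms(1)]) auto
    finally show ?thesis
      using assms(2)[OF that] unfolding lsq_loss_add_scaleR c_def[symmetric] by (simp add: algebra_simps)
  qed
  then show ?thesis
    using nonneg_if_quadratic_nonneg_near_zero[of "R (x + d) - R x - inner (betavec A y lam x) d" c]
    by simp
qed

section \<open>Global optimality from a dual certificate on the excluded groups\<close>

lemma notin_Eset_if_mem_excluded_group: "t \<notin> I \<Longrightarrow> j \<in> G t \<Longrightarrow> j \<notin> Eset G I"
  by (auto simp: Eset_def)

lemma subnorm_cong: "(\<And>j. j \<in> S \<Longrightarrow> a $ j = b $ j) \<Longrightarrow> subnorm S a = subnorm S b"
  unfolding subnorm_def by simp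

lemma group_penalty_restrict_Eset:
  assumes "\<And>t. w t \<ge> 0"
  shows "group_penalty G w (restrict_coords (Eset G I) z)
           + (\<Sum>t\<in>-I. w t * subnorm (G t) (z - restrict_coords (Eset G I) z))
         \<le> group_penalty G w z"
proof -
  let ?E = "Eset G I"
  have "w t * subnorm (G t) (restrict_coords ?E z)
          + (if t \<in> -I then w t * subnorm (G t) (z - restrict_coords ?E z) else 0)
        \<le> w t * subnorm (G t) z" for t
  proof (cases "t \<in> I")
    case True
    have "subnorm (G t) (restrict_coords ?E z) \<le> subnorm (G t) z"
      by (rule subnorm_mono) simp
    then show ?thesis
      using True assms[of t] by (simp add: mult_left_mono)
  next
    case False
    then have "j \<notin> ?E" if "j \<in> G t" for j
      using that by (rule notin_Eset_if_mem_excluded_group)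
    then have "subnorm (G t) (restrict_coords ?E z) = subnorm (G t) 0"
      and "subnorm (G t) (z - restrict_coords ?E z) = subnorm (G t) z"
      by (auto intro: subnorm_cong)
    then show ?thesis
      using False by (simp add: subnorm_def)
  qed
  then have "(\<Sum>t\<in>UNIV. w t * subnorm (G t) (restrict_coords ?E z)
          + (if t \<in> -I then w t * subnorm (G t) (z - restrict_coords ?E z) else 0))
        \<le> group_penalty G w z"
    unfolding group_penalty_def by (rule sum_mono)
  then show ?thesis
    unfolding group_penalty_def sum.distrib by (simp add: sum.If_cases Compl_eq)
qed

definition outer_weight :: "('g::finite \<Rightarrow> 'n::finite set) \<Rightarrow> ('g \<Rightarrow> real) \<Rightarrow> 'g set \<Rightarrow> 'n \<Rightarrow> real" where
  "outer_weight G w I j = (\<Sum>s\<in>{s \<in> -I. j \<in> G s}. (w s)\<^sup>2)"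

definition dual_block :: "('g::finite \<Rightarrow> 'n::finite set) \<Rightarrow> ('g \<Rightarrow> real) \<Rightarrow> 'g set \<Rightarrow> real^'n \<Rightarrow> 'g \<Rightarrow> real^'n" where
  "dual_block G w I b t = (\<chi> j. (w t)\<^sup>2 / outer_weight G w I j * b $ j)"

lemma outer_weight_pos:
  assumes "\<And>t. w t > 0" and "j \<notin> Eset G I"
  shows "outer_weight G w I j > 0"
proof -
  obtain s where "s \<notin> I" "j \<in> G s"
    using assms(2) unfolding Eset_def by blast
  then show ?thesis
    unfolding outer_weight_def
    by (intro sum_pos2[where i = s]) (auto simp: assms(1) less_imp_neq[OF assms(1), symmetric])
qed

lemma sum_dual_block_component:
  assumes "\<And>t. w t > 0" and "j \<notin> Eset G I"
  shows "(\<Sum>t\<in>{t \<in> -I. j \<in> G t}. dual_block G w I b t $ j) = b $ j"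
proof -
  have "(\<Sum>t\<in>{t \<in> -I. j \<in> G t}. dual_block G w I b t $ j)
      = outer_weight G w I j / outer_weight G w I j * b $ j"
    unfolding dual_block_def outer_weight_def
    by (simp add: sum_divide_distrib[symmetric] sum_distrib_right[symmetric])
  then show ?thesis
    using outer_weight_pos[where w = w, OF assms] by simp
qed

lemma inner_le_group_penalty_outside:
  assumes "\<And>t. w t > 0"
    and "\<And>j. j \<in> Eset G I \<Longrightarrow> q $ j = 0"
    and "\<And>t. t \<notin> I \<Longrightarrow> subnorm (G t) (dual_block G w I b t) \<le> w t"
  shows "inner b q \<le> (\<Sum>t\<in>-I. w t * subnorm (G t) q)"
proof -
  have "b $ j * q $ j = (\<Sum>t\<in>{t \<in> -I. j \<in> G t}. dual_block G w I b t $ j * q $ j)" for j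
    using assms(2)[of j] sum_dual_block_component[where w = w and j = j and b = b, OF assms(1)]
    by (cases "j \<in> Eset G I") (auto simp: sum_distrib_right[symmetric])
  then have "inner b q = (\<Sum>j\<in>UNIV. \<Sum>t\<in>{t \<in> -I. j \<in> G t}. dual_block G w I b t $ j * q $ j)"
    unfolding inner_vec_def by simp
  also have "\<dots> = (\<Sum>t\<in>-I. \<Sum>j\<in>G t. dual_block G w I b t $ j * q $ j)"
    by (subst sum.swap_restrict) simp_all
  also have "\<dots> \<le> (\<Sum>t\<in>-I. w t * subnorm (G t) q)"
  proof (rule sum_mono)
    fix t
    assume "t \<in> -I"
    then have "subnorm (G t) (dual_block G w I b t) * subnorm (G t) q \<le> w t * subnorm (G t) q"
      using assms(3) by (intro mult_right_mono subnorm_nonneg) auto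
    then show "(\<Sum>j\<in>G t. dual_block G w I b t $ j * q $ j) \<le> w t * subnorm (G t) q"
      using subnorm_cauchy_schwarz[where S = "G t" and a = "dual_block G w I b t" and b = q] by linarith
  qed
  finally show ?thesis .
qed

lemma global_min_if_restricted_min:
  fixes G :: "'g::finite \<Rightarrow> 'n::finite set"
  assumes wpos: "\<And>t. w t > 0" and lam_pos: "lam > 0"
    and restricted_min: "\<And>v. objective G A y lam (liftL G w) x
                              \<le> objective G A y lam (liftL G w) (restrict_coords (Eset G I) v)"
    and support: "\<And>i. i \<notin> Eset G I \<Longrightarrow> x $ i = 0"
    and dual_feasible: "\<And>t. t \<notin> I \<Longrightarrow> subnorm (G t) (dual_block G w I (betavec A y lam x) t) \<le> w t"
  shows "objective G A y lam (liftL G w) x \<le> objective G A y lam (liftL G w) z"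
proof -
  let ?P = "restrict_coords (Eset G I)"
  let ?R = "group_penalty G w"
  let ?h = "lsq_loss A y lam"
  define beta where "beta = betavec A y lam x"
  define d where "d = ?P z - x"
  define q where "q = z - ?P z"
  have wnonneg: "\<And>t. w t \<ge> 0"
    using wpos less_imp_le by blast
  have "inner beta d \<le> ?R (x + d) - ?R x"
    unfolding beta_def
  proof (rule lsq_first_order_condition[OF convex_on_group_penalty[OF wnonneg]])
    fix s :: real
    have "?P (x + s *\<^sub>R d) = x + s *\<^sub>R d"
      using support unfolding d_def by (auto simp: vec_eq_iff)
    then show "?h x + ?R x \<le> ?h (x + s *\<^sub>R d) + ?R (x + s *\<^sub>R d)"
      using restricted_min[of "x + s *\<^sub>R d"] by (simp add: objective_liftL[OF wnonneg])
  qed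
  moreover have "?R (?P z) + (\<Sum>t\<in>-I. w t * subnorm (G t) q) \<le> ?R z"
    unfolding q_def by (rule group_penalty_restrict_Eset[OF wnonneg])
  moreover have "inner beta q \<le> (\<Sum>t\<in>-I. w t * subnorm (G t) q)"
    using wpos by (rule inner_le_group_penalty_outside) (auto simp: q_def beta_def dual_feasible)
  moreover have "?h x - inner beta (d + q) \<le> ?h z"
  proof -
    have "?h z = ?h x - inner beta (d + q) + (norm (A *v (d + q)))\<^sup>2 / (2 * lam)"
      using lsq_loss_add_scaleR[of A y lam x 1 "d + q"] unfolding beta_def d_def q_def by simp
    then show ?thesis
      using lam_pos by simp
  qed
  ultimately show ?thesis
    unfolding objective_liftL[OF wnonneg] d_def by (simp add: inner_add_right)
qed

section \<open>The support-update rules\<close>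

lemma subnorm_dual_block_le:
  assumes "t \<notin> I"
  shows "subnorm (G t) (dual_block G w I b t) \<le> subnorm (G t) b"
proof (rule subnorm_mono)
  fix j
  assume "j \<in> G t"
  then have "(w t)\<^sup>2 \<le> outer_weight G w I j"
    unfolding outer_weight_def using assms by (intro member_le_sum) auto
  moreover have "0 \<le> outer_weight G w I j"
    using calculation zero_le_power2 order_trans by blast
  ultimately have "0 \<le> (w t)\<^sup>2 / outer_weight G w I j" "(w t)\<^sup>2 / outer_weight G w I j \<le> 1"
    by (auto simp: divide_le_eq_1 less_le)
  then show "\<bar>dual_block G w I b t $ j\<bar> \<le> \<bar>b $ j\<bar>"
    unfolding dual_block_def vec_lambda_beta abs_mult
    by (metis abs_ge_zero abs_of_nonneg mult_left_le_one_le)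
qed

lemma sum_UNIV_eq_single:
  fixes f :: "'a::finite \<Rightarrow> 'b::comm_monoid_add"
  assumes "\<And>j. j \<noteq> i \<Longrightarrow> f j = 0"
  shows "(\<Sum>j\<in>UNIV. f j) = f i"
  using sum.mono_neutral_right[of UNIV "{i}" f] assms by auto

lemma projTz_liftL_component:
  "(projTz G I ** liftL G w) $ r $ i = (if fst r \<in> I \<and> snd r \<in> G (fst r) then liftL G w $ r $ i else 0)"
  unfolding matrix_matrix_mult_def projTz_def
  by (auto simp: if_distrib[where f="\<lambda>a. a * c" for c] cong: if_cong)

lemma mult_id_minus_projT_component:
  "(B ** (mat 1 - projT G I)) $ r $ i = (if i \<in> Eset G I then 0 else B $ r $ i)"
  unfolding matrix_matrix_mult_def projT_def mat_def
  by (simp only: vec_lambda_beta, subst sum_UNIV_eq_single[where i = i]) auto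

lemma Lhat_component:
  "Lhat G w I $ r $ i =
     (if snd r \<in> G (fst r) \<and> i = snd r \<and> (fst r \<notin> I \<or> i \<in> Eset G I) then w (fst r) else 0)"
  unfolding Lhat_def
  by (simp only: vector_minus_component mult_id_minus_projT_component projTz_liftL_component)
    (auto simp: liftL_def)

lemma Lhat_gram:
  "transpose (Lhat G w I) ** Lhat G w I
     = (\<chi> i k. if i = k then (\<Sum>s | i \<in> G s \<and> (s \<notin> I \<or> i \<in> Eset G I). (w s)\<^sup>2) else 0)"
proof -
  have "(transpose (Lhat G w I) ** Lhat G w I) $ i $ k
      = (\<Sum>t\<in>UNIV. \<Sum>j\<in>UNIV. Lhat G w I $ (t, j) $ i * Lhat G w I $ (t, j) $ k)" for i k
    unfolding matrix_matrix_mult_def transpose_def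
    by (simp add: sum.cartesian_product UNIV_Times_UNIV[symmetric] del: UNIV_Times_UNIV)
  also have "\<dots> i k = (\<Sum>t\<in>UNIV. if i = k \<and> i \<in> G t \<and> (t \<notin> I \<or> i \<in> Eset G I) then (w t)\<^sup>2 else 0)"
    for i k
    unfolding Lhat_component
    by (rule sum.cong[OF refl], subst sum_UNIV_eq_single[where i = i]) (auto simp: power2_eq_square)
  finally show ?thesis
    by (auto simp: vec_eq_iff sum.If_cases)
qed

lemma matrix_inv_diagonal:
  fixes d :: "'n::finite \<Rightarrow> real"
  assumes "\<And>i. d i \<noteq> 0"
  shows "matrix_inv (\<chi> i k. if i = k then d i else 0) = (\<chi> i k. if i = k then inverse (d i) else 0)"
proof -
  define D :: "real^'n^'n" where "D = (\<chi> i k. if i = k then d i else 0)"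
  define D' :: "real^'n^'n" where "D' = (\<chi> i k. if i = k then inverse (d i) else 0)"
  have inverse_pair: "D ** D' = mat 1 \<and> D' ** D = mat 1"
    unfolding D_def D'_def matrix_matrix_mult_def mat_def
    by (simp add: vec_eq_iff if_distrib[where f="\<lambda>a. a * c" for c] assms cong: if_cong)
  then have "matrix_inv D ** D = mat 1"
    unfolding matrix_inv_def by (rule someI2) simp
  have "matrix_inv D = matrix_inv D ** (D ** D')"
    using inverse_pair by simp
  also have "\<dots> = (matrix_inv D ** D) ** D'"
    by (simp add: matrix_mul_assoc)
  also have "\<dots> = D'"
    using \<open>matrix_inv D ** D = mat 1\<close> by simp
  finally show ?thesis
    unfolding D_def D'_def .
qed

lemma diagonal_mult_vec: "(\<chi> i k. if i = k then d i else 0) *v v = (\<chi> i. d i * v $ i)"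
  unfolding matrix_vector_mult_def
  by (simp add: vec_eq_iff if_distrib[where f="\<lambda>a. a * c" for c] cong: if_cong)

lemma blocknorm_Lhat_pseudoinverse:
  assumes cover: "\<And>j. \<exists>s. j \<in> G s" and wpos: "\<And>s. w s > 0" and "t \<notin> I"
  shows "w t * blocknorm G (Lhat G w I *v (matrix_inv (transpose (Lhat G w I) ** Lhat G w I) *v b)) t
           = subnorm (G t) (dual_block G w I b t)"
proof -
  let ?E = "Eset G I"
  define d where "d i = (\<Sum>s | i \<in> G s \<and> (s \<notin> I \<or> i \<in> ?E). (w s)\<^sup>2)" for i
  have "d i > 0" for i
  proof -
    obtain s where s: "i \<in> G s" "s \<notin> I \<or> i \<in> ?E"
      using cover[of i] unfolding Eset_def by blast
    then show ?thesis
      unfolding d_def by (intro sum_pos2[where i = s]) (auto simp: wpos less_imp_neq[OF wpos, symmetric])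
  qed
  then have "matrix_inv (transpose (Lhat G w I) ** Lhat G w I) *v b = (\<chi> i. b $ i / d i)"
    unfolding Lhat_gram d_def[symmetric]
    by (simp add: matrix_inv_diagonal less_imp_neq[symmetric] diagonal_mult_vec field_simps)
  moreover have "(Lhat G w I *v (\<chi> i. b $ i / d i)) $ (t, j) = w t * (b $ j / outer_weight G w I j)"
    if "j \<in> G t" for j
  proof -
    have "j \<notin> ?E"
      using \<open>t \<notin> I\<close> that by (rule notin_Eset_if_mem_excluded_group)
    then have "d j = outer_weight G w I j"
      unfolding d_def outer_weight_def by (metis Compl_iff)
    then show ?thesis
      unfolding matrix_vector_mult_def
      by (simp, subst sum_UNIV_eq_single[where i = j]) (auto simp: Lhat_component \<open>t \<notin> I\<close> that)
  qed
  ultimately have "w t * blocknorm G (Lhat G w I *v (matrix_inv (transpose (Lhat G w I) ** Lhat G w I) *v b)) t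
      = sqrt ((w t)\<^sup>2 * (\<Sum>j\<in>G t. (w t * (b $ j / outer_weight G w I j))\<^sup>2))"
    unfolding blocknorm_def real_sqrt_mult using wpos[of t] by simp
  also have "\<dots> = subnorm (G t) (dual_block G w I b t)"
    unfolding subnorm_def dual_block_def sum_distrib_left
    by (simp add: power2_eq_square mult_ac)
  finally show ?thesis .
qed

lemma tendsto_matrix_vector_mult [tendsto_intros]:
  "(f \<longlongrightarrow> l) F \<Longrightarrow> ((\<lambda>x. M *v f x) \<longlongrightarrow> M *v l) F"
  for M :: "real^'n::finite^'m::finite"
  by (rule bounded_linear.tendsto[OF matrix_vector_mul_bounded_linear])

lemma tendsto_subnorm [tendsto_intros]:
  "(f \<longlongrightarrow> l) F \<Longrightarrow> ((\<lambda>x. subnorm S (f x)) \<longlongrightarrow> subnorm S l) F"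
  unfolding subnorm_def by (intro tendsto_intros)

lemma tendsto_blocknorm [tendsto_intros]:
  "(f \<longlongrightarrow> l) F \<Longrightarrow> ((\<lambda>x. blocknorm G (f x) t) \<longlongrightarrow> blocknorm G l t) F"
  unfolding blocknorm_def by (intro tendsto_intros)

lemma tendsto_betavec [tendsto_intros]:
  "(f \<longlongrightarrow> l) F \<Longrightarrow> ((\<lambda>x. betavec A y lam (f x)) \<longlongrightarrow> betavec A y lam l) F"
  unfolding betavec_def by (intro tendsto_intros)

lemma dual_feasible_if_stable:
  fixes G :: "'g::finite \<Rightarrow> 'n::finite set"
  assumes cover: "\<And>j. \<exists>s. j \<in> G s" and wpos: "\<And>s. w s > 0"
    and update: "(\<forall>k. I (Suc k) = optionI_update G w (I k) (betavec A y lam (x (Suc k))))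
               \<or> (\<forall>k. I (Suc k) = optionII_update G w (I k) (betavec A y lam (x (Suc k))))"
    and stable: "\<And>k. k \<ge> K \<Longrightarrow> I k = Ibar"
    and converges: "x \<longlonglongrightarrow> xt"
    and "t \<notin> Ibar"
  shows "subnorm (G t) (dual_block G w Ibar (betavec A y lam xt) t) \<le> w t"
proof -
  let ?beta = "\<lambda>k. betavec A y lam (x (Suc k))"
  have beta_lim: "?beta \<longlonglongrightarrow> betavec A y lam xt"
    using LIMSEQ_Suc[OF converges] by (rule tendsto_betavec)
  have excluded: "t \<notin> I (Suc k)" and unchanged: "I k = Ibar" if "k \<ge> K" for k
    using stable[of k] stable[of "Suc k"] that \<open>t \<notin> Ibar\<close> by auto
  from update show ?thesis
  proof
    assume optionI: "\<forall>k. I (Suc k) = optionI_update G w (I k) (?beta k)"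
    have "\<forall>k\<ge>K. subnorm (G t) (?beta k) \<le> w t"
      using excluded unchanged optionI unfolding optionI_update_def by fastforce
    then have "subnorm (G t) (betavec A y lam xt) \<le> w t"
      using LIMSEQ_le_const2[OF tendsto_subnorm[OF beta_lim]] by blast
    then show ?thesis
      using subnorm_dual_block_le[OF \<open>t \<notin> Ibar\<close>] by (rule order_trans[rotated])
  next
    assume optionII: "\<forall>k. I (Suc k) = optionII_update G w (I k) (?beta k)"
    let ?Lh = "Lhat G w Ibar"
    let ?u = "\<lambda>b. ?Lh *v (matrix_inv (transpose ?Lh ** ?Lh) *v b)"
    have "\<forall>k\<ge>K. blocknorm G (?u (?beta k)) t \<le> 1"
      using excluded unchanged optionII unfolding optionII_update_def Let_def by fastforce
    then have "blocknorm G (?u (betavec A y lam xt)) t \<le> 1"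
      using LIMSEQ_le_const2[OF tendsto_blocknorm[OF tendsto_matrix_vector_mult[OF
          tendsto_matrix_vector_mult[OF beta_lim]]]] by blast
    then show ?thesis
      unfolding blocknorm_Lhat_pseudoinverse[OF cover wpos \<open>t \<notin> Ibar\<close>, symmetric]
      using wpos[of t] by (simp add: mult_left_le_one_le)
  qed
qed

theorem proposition4p2:
  fixes G :: "'g::finite \<Rightarrow> 'n::finite set"
    and w :: "'g \<Rightarrow> real"
    and A :: "real^'n^'m::finite"
    and y :: "real^'m"
    and lam :: real
    and I :: "nat \<Rightarrow> 'g set"
    and x :: "nat \<Rightarrow> real^'n"
    and Ibar :: "'g set"
    and xt :: "real^'n"
  assumes groups_nonempty: "\<And>t. G t \<noteq> {}"
    and groups_cover: "(\<Union>t. G t) = UNIV"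
    and weights_pos: "\<And>t. w t > 0"
    and lam_pos: "lam > 0"
    and update: "(\<forall>k. I (Suc k) = optionI_update G w (I k) (betavec A y lam (x (Suc k))))
               \<or> (\<forall>k. I (Suc k) = optionII_update G w (I k) (betavec A y lam (x (Suc k))))"
    and stabilizes: "\<exists>K. \<forall>k\<ge>K. I k = Ibar"
    and converges: "x \<longlonglongrightarrow> xt"
    and restricted_min: "\<And>z. objective G (A ** projT G Ibar) y lam (liftL G w ** projT G Ibar) xt
                              \<le> objective G (A ** projT G Ibar) y lam (liftL G w ** projT G Ibar) z"
    and xt_support: "\<And>i. i \<notin> Eset G Ibar \<Longrightarrow> xt $ i = 0"
  shows "\<forall>z. objective G A y lam (liftL G w) xt \<le> objective G A y lam (liftL G w) z"
proof
  fix z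
  obtain K where stable: "\<And>k. k \<ge> K \<Longrightarrow> I k = Ibar"
    using stabilizes by blast
  have cover: "\<And>j. \<exists>s. j \<in> G s"
    using groups_cover by blast
  have xt_fixed: "restrict_coords (Eset G Ibar) xt = xt"
    by (simp add: vec_eq_iff xt_support)
  have restricted: "objective G A y lam (liftL G w) xt
          \<le> objective G A y lam (liftL G w) (restrict_coords (Eset G Ibar) v)" for v
    using restricted_min[of v] unfolding objective_mult_right projT_mult_vec xt_fixed .
  have dual_feasible: "subnorm (G t) (dual_block G w Ibar (betavec A y lam xt) t) \<le> w t"
    if "t \<notin> Ibar" for t
    by (rule dual_feasible_if_stable[OF cover weights_pos update stable converges that])
  show "objective G A y lam (liftL G w) xt \<le> objective G A y lam (liftL G w) z"
    by (rule global_min_if_restricted_min[OF weights_pos lam_pos restricted xt_support dual_feasible])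
qed

end
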